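(* Let $N=\{1,\dots,n\}$ and let $F:2^N\to\mathbb{R}$ be quasi-submodular, given by a value oracle. The maximization procedure (described in the context) terminates after $\mathcal{O}(n)$ iterations, and its total time complexity (counting each oracle evaluation of $F$ as one step) is $\mathcal{O}(n^2)$.
   Context: For $A\subseteq N$ and $i\in N$, write $A+i=A\cup\{i\}$, $A-i=A\setminus\{i\}$, and $F(i\mid A)=F(A+i)-F(A)$. A set function $F:2^N\to\mathbb{R}$ is quasi-submodular if for all $X,Y\subseteq N$ both hold: $F(X\cap Y)\ge F(X)\Rightarrow F(Y)\ge F(X\cup Y)$, and $F(X\cap Y)>F(X)\Rightarrow F(Y)>F(X\cup Y)$. Maximization procedure: set $X_0=\emptyset$, $Y_0=N$; for $t=0,1,2,\dots$: let $U_t=\{u\in Y_t\setminus X_t: F(u\mid Y_t-u)>0\}$ and $X_{t+1}=X_t\cup U_t$; let $D_t=\{d\in Y_t\setminus X_t: F(d\mid X_t)<0\}$ and $Y_{t+1}=Y_t\setminus D_t$; if $X_{t+1}=X_t$ and $Y_{t+1}=Y_t$, stop and output the lattice $[X_t,Y_t]=\{U: X_t\subseteq U\subseteq Y_t\}$; otherwise continue with $t+1$. *)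

theory Defs
  imports Complex_Main
begin

text \<open>Set functions are modelled as F :: nat set \<Rightarrow> real; only their values on
  subsets of the ground set N matter.\<close>

definition marg :: "(nat set \<Rightarrow> real) \<Rightarrow> nat \<Rightarrow> nat set \<Rightarrow> real" where
  "marg F i A = F (insert i A) - F A"

definition quasi_submodular :: "nat set \<Rightarrow> (nat set \<Rightarrow> real) \<Rightarrow> bool" where
  "quasi_submodular N F \<longleftrightarrow>
     (\<forall>X Y. X \<subseteq> N \<longrightarrow> Y \<subseteq> N \<longrightarrow>
        (F (X \<inter> Y) \<ge> F X \<longrightarrow> F Y \<ge> F (X \<union> Y)) \<and>
        (F (X \<inter> Y) > F X \<longrightarrow> F Y > F (X \<union> Y)))"

definition up_set :: "(nat set \<Rightarrow> real) \<Rightarrow> nat set \<times> nat set \<Rightarrow> nat set" where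
  "up_set F S = {u \<in> snd S - fst S. marg F u (snd S - {u}) > 0}"

definition down_set :: "(nat set \<Rightarrow> real) \<Rightarrow> nat set \<times> nat set \<Rightarrow> nat set" where
  "down_set F S = {d \<in> snd S - fst S. marg F d (fst S) < 0}"

definition qsm_step :: "(nat set \<Rightarrow> real) \<Rightarrow> nat set \<times> nat set \<Rightarrow> nat set \<times> nat set" where
  "qsm_step F S = (fst S \<union> up_set F S, snd S - down_set F S)"

definition qsm_state :: "(nat set \<Rightarrow> real) \<Rightarrow> nat set \<Rightarrow> nat \<Rightarrow> nat set \<times> nat set" where
  "qsm_state F N t = (qsm_step F ^^ t) ({}, N)"

definition qsm_stops_at :: "(nat set \<Rightarrow> real) \<Rightarrow> nat set \<Rightarrow> nat \<Rightarrow> bool" where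
  "qsm_stops_at F N t \<longleftrightarrow> qsm_step F (qsm_state F N t) = qsm_state F N t"

definition qsm_stop_time :: "(nat set \<Rightarrow> real) \<Rightarrow> nat set \<Rightarrow> nat" where
  "qsm_stop_time F N = (LEAST t. qsm_stops_at F N t)"

text \<open>Oracle cost of iteration t: for each candidate element i in Y_t - X_t the
  procedure evaluates the two marginal gains F(i | Y_t - i) and F(i | X_t), i.e.
  four evaluations of F. The total counts iterations 0..T where T is the
  stopping iteration (the last one detects termination).\<close>

definition qsm_iter_cost :: "(nat set \<Rightarrow> real) \<Rightarrow> nat set \<Rightarrow> nat \<Rightarrow> nat" where
  "qsm_iter_cost F N t = 4 * card (snd (qsm_state F N t) - fst (qsm_state F N t))"

definition qsm_oracle_calls :: "(nat set \<Rightarrow> real) \<Rightarrow> nat set \<Rightarrow> nat" where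
  "qsm_oracle_calls F N = (\<Sum>t\<le>qsm_stop_time F N. qsm_iter_cost F N t)"

end

theory Submission
  imports Defs
begin

text \<open>Each iteration that does
  not stop enlarges X_t or shrinks Y_t inside the n-element ground set, so the potential
  |X_t| + |N - Y_t| strictly increases while staying at most 2n. Hence the procedure stops
  within 2n iterations, each costing at most 4n oracle calls.\<close>

lemma qsm_state_0: "qsm_state F N 0 = ({}, N)"
  by (simp add: qsm_state_def)

lemma qsm_state_Suc: "qsm_state F N (Suc t) = qsm_step F (qsm_state F N t)"
  by (simp add: qsm_state_def)

lemma qsm_state_subset: "fst (qsm_state F N t) \<subseteq> N" "snd (qsm_state F N t) \<subseteq> N"
  by (induction t) (auto simp: qsm_state_0 qsm_state_Suc qsm_step_def up_set_def)

lemma qsm_state_Suc_mono: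
  "fst (qsm_state F N t) \<subseteq> fst (qsm_state F N (Suc t))"
  "snd (qsm_state F N (Suc t)) \<subseteq> snd (qsm_state F N t)"
  by (auto simp: qsm_state_Suc qsm_step_def)

definition qsm_potential :: "(nat set \<Rightarrow> real) \<Rightarrow> nat set \<Rightarrow> nat \<Rightarrow> nat" where
  "qsm_potential F N t = card (fst (qsm_state F N t)) + card (N - snd (qsm_state F N t))"

lemma qsm_potential_le:
  assumes "finite N"
  shows "qsm_potential F N t \<le> 2 * card N"
proof -
  have "card (fst (qsm_state F N t)) \<le> card N" "card (N - snd (qsm_state F N t)) \<le> card N"
    using card_mono[OF assms qsm_state_subset(1)] card_mono[OF assms Diff_subset] by auto
  then show ?thesis
    unfolding qsm_potential_def by linarith
qed

lemma qsm_potential_Suc_less: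
  assumes "finite N" and "\<not> qsm_stops_at F N t"
  shows "qsm_potential F N t < qsm_potential F N (Suc t)"
proof -
  obtain X Y where S: "qsm_state F N t = (X, Y)" by fastforce
  obtain X' Y' where S': "qsm_state F N (Suc t) = (X', Y')" by fastforce
  have sub: "X \<subseteq> X'" "N - Y \<subseteq> N - Y'"
    using qsm_state_Suc_mono[of F N t] S S' by auto
  have fin: "finite X'" "finite (N - Y')"
    using qsm_state_subset(1)[of F N "Suc t"] S' \<open>finite N\<close> finite_subset by auto
  have "X \<noteq> X' \<or> Y \<noteq> Y'"
    using assms(2) S S' by (auto simp: qsm_stops_at_def qsm_state_Suc)
  moreover have "Y \<subseteq> N" "Y' \<subseteq> Y"
    using qsm_state_subset(2)[of F N t] qsm_state_Suc_mono(2)[of F N t] S S' by auto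
  ultimately have "X \<subset> X' \<or> N - Y \<subset> N - Y'"
    using sub by blast
  then have "card X < card X' \<or> card (N - Y) < card (N - Y')"
    using fin psubset_card_mono by blast
  moreover have "card X \<le> card X'" "card (N - Y) \<le> card (N - Y')"
    using fin sub card_mono by blast+
  ultimately have "card X + card (N - Y) < card X' + card (N - Y')"
    by linarith
  then show ?thesis
    by (simp add: qsm_potential_def S S')
qed

lemma qsm_potential_ge_steps:
  assumes "finite N" and "\<forall>s<t. \<not> qsm_stops_at F N s"
  shows "t \<le> qsm_potential F N t"
  using assms(2)
proof (induction t)
  case (Suc t)
  then show ?case
    using qsm_potential_Suc_less[OF assms(1), of F t] by fastforce
qed simp

lemma qsm_stops_within: "finite N \<Longrightarrow> \<exists>t\<le>2 * card N. qsm_stops_at F N t"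
  using qsm_potential_ge_steps[of N "Suc (2 * card N)" F] qsm_potential_le[of N F]
  by (metis less_Suc_eq_le not_less_eq_eq)

lemma qsm_stop_time_le: "finite N \<Longrightarrow> qsm_stop_time F N \<le> 2 * card N"
  unfolding qsm_stop_time_def using qsm_stops_within Least_le le_trans by metis

lemma qsm_iter_cost_le: "finite N \<Longrightarrow> qsm_iter_cost F N t \<le> 4 * card N"
  unfolding qsm_iter_cost_def
  using card_mono[OF _ subset_trans[OF Diff_subset qsm_state_subset(2)]] by simp

lemma qsm_oracle_calls_le:
  assumes "finite N"
  shows "qsm_oracle_calls F N \<le> (2 * card N + 1) * (4 * card N)"
proof -
  have "qsm_oracle_calls F N \<le> (\<Sum>t\<le>qsm_stop_time F N. 4 * card N)"
    unfolding qsm_oracle_calls_def using qsm_iter_cost_le[OF assms] by (intro sum_mono)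
  also have "\<dots> = (qsm_stop_time F N + 1) * (4 * card N)"
    by simp
  also have "\<dots> \<le> (2 * card N + 1) * (4 * card N)"
    using qsm_stop_time_le[OF assms] by simp
  finally show ?thesis .
qed

theorem theorem3:
  "\<exists>c::real. \<forall>(n::nat) (F::nat set \<Rightarrow> real).
     quasi_submodular {1..n} F \<longrightarrow>
       (\<exists>t. qsm_stops_at F {1..n} t) \<and>
       real (qsm_stop_time F {1..n}) \<le> c * (real n + 1) \<and>
       real (qsm_oracle_calls F {1..n}) \<le> c * (real n + 1)^2"
proof (rule exI[of _ 8], intro allI impI conjI)
  fix n :: nat and F :: "nat set \<Rightarrow> real"
  have fin: "finite {1..n}" and card: "card {1..n} = n"
    by simp_all
  show "\<exists>t. qsm_stops_at F {1..n} t"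
    using qsm_stops_within[OF fin] by blast
  have "real (qsm_stop_time F {1..n}) \<le> real (2 * n)"
    using qsm_stop_time_le[OF fin, of F] card by (simp only: of_nat_le_iff)
  then show "real (qsm_stop_time F {1..n}) \<le> 8 * (real n + 1)"
    by simp
  have "real (qsm_oracle_calls F {1..n}) \<le> real ((2 * n + 1) * (4 * n))"
    using qsm_oracle_calls_le[OF fin, of F] card by (simp only: of_nat_le_iff)
  also have "\<dots> \<le> 8 * (real n + 1)^2"
    by (simp add: power2_eq_square algebra_simps)
  finally show "real (qsm_oracle_calls F {1..n}) \<le> 8 * (real n + 1)^2" .
qed

end
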